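(* Let $G$ be a group and let $M$ and $K$ be normal subgroups of $G$, where $M$ is finitely generated as a normal subgroup of $G$. If $H$ is a finite index normal subgroup of $G$ containing $M$, then \[relsize(M;H,K\cap H)\le |G:H|\,relsize(M;G,K).\]
   Context: For a group $G$, a normal subgroup $K$ and $g\in G$, with $\pi:G\to G/K$ the quotient map: if $g\in K$, $\nu(g;G,K)$ is the supremum of the orders of $\pi(a)$ in $G/K$ over all $a\in G$ with $a^n=g$ for some integer $n$; if $g\notin K$, $\nu(g;G,K)$ is the supremum of all non-zero integers $n$ with $g=a^n$ for some $a\in G$; $\nu(g;G,K)^{-1}$ is taken to be $0$ if $\nu(g;G,K)$ is infinite. For a finite set $S=\{s_1,\ldots,s_m\}\subseteq G$, $relsize(S;G,K)=\sum_{i=1}^m\nu(s_i;G,K)^{-1}$. For a normal subgroup $M$ of $G$ finitely generated as a normal subgroup, $relsize(M;G,K)$ is the infimum of $relsize(S;G,K)$ over all finite $S\subseteq G$ whose normal closure in $G$ is $M$. Likewise $relsize(M;H,K\cap H)$ is computed in the group $H$ with its normal subgroup $K\cap H$, over finite $S\subseteq H$ whose normal closure in $H$ is $M$. *)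

theory Defs
  imports "HOL-Algebra.Algebra" "HOL-Library.Extended_Real"
begin

text \<open>Order of an element, with infinite order rendered as \<infinity>
 (HOL-Algebra's group.ord is 0 for elements of infinite order).\<close>
definition elt_order :: "('a, 'b) monoid_scheme \<Rightarrow> 'a \<Rightarrow> enat" where
  "elt_order G x = (if group.ord G x = 0 then \<infinity> else enat (group.ord G x))"

definition nu :: "('a, 'b) monoid_scheme \<Rightarrow> 'a set \<Rightarrow> 'a \<Rightarrow> enat" where
  "nu G K g =
    (if g \<in> K then
       Sup {elt_order (G Mod K) (K #>\<^bsub>G\<^esub> a) | a. a \<in> carrier G \<and> (\<exists>n::int. a [^]\<^bsub>G\<^esub> n = g)}
     else
       Sup {enat (nat n) | n::int. n \<noteq> 0 \<and> (\<exists>a\<in>carrier G. g = a [^]\<^bsub>G\<^esub> n)})"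

definition nu_inv :: "('a, 'b) monoid_scheme \<Rightarrow> 'a set \<Rightarrow> 'a \<Rightarrow> real" where
  "nu_inv G K g = (case nu G K g of enat m \<Rightarrow> 1 / real m | \<infinity> \<Rightarrow> 0)"

definition relsize_set :: "('a, 'b) monoid_scheme \<Rightarrow> 'a set \<Rightarrow> 'a set \<Rightarrow> real" where
  "relsize_set G K S = (\<Sum>s\<in>S. nu_inv G K s)"

definition normal_closure :: "('a, 'b) monoid_scheme \<Rightarrow> 'a set \<Rightarrow> 'a set" where
  "normal_closure G S = \<Inter> {N. N \<lhd> G \<and> S \<subseteq> N}"

definition relsize :: "('a, 'b) monoid_scheme \<Rightarrow> 'a set \<Rightarrow> 'a set \<Rightarrow> ereal" where
  "relsize G K M = Inf {ereal (relsize_set G K S) | S.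
      finite S \<and> S \<subseteq> carrier G \<and> normal_closure G S = M}"

end

theory Submission
  imports Defs
begin

text \<open>Fix a finite set S normally generating M, an element s \<in> S and N > 0 with N \<le> nu(s; G, K).
  Choose a root a of s (a^n = s) witnessing this bound, and let r be the order of Ha in G/H. Then r
  divides n, so for every x \<in> G the element x a^r x^-1 of H is an (n/r)-th root of x s x^-1;
  comparing the orders of Ka in G/K and of (K \<inter> H) x a^r x^-1 in H/(K \<inter> H) yields
  r * nu(x s x^-1; H, K \<inter> H) \<ge> N. The G-conjugacy class of s splits into H-conjugacy classes.
  Picking one representative x s x^-1 of each gives a set T, and the cosets H x a^i (i < r) are pairwise
  distinct over all representatives, since a^i commutes with s; hence |T| * r \<le> |G:H| and the elements
  of T contribute at most |G:H| / N to relsize. The union of these sets over s \<in> S normally generates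
  M inside H, and N may be taken equal to nu(s; G, K) or arbitrarily large.\<close>

lemma enat_le_Sup_imp_ex:
  fixes A :: "enat set"
  assumes "enat N \<le> Sup A" "0 < N"
  shows "\<exists>x\<in>A. enat N \<le> x"
proof -
  have N: "N = Suc (N - 1)" using assms(2) by simp
  then have "enat (N - 1) < Sup A" using assms(1) Suc_ile_eq by metis
  then obtain x where "x \<in> A" "enat (N - 1) < x" using less_Sup_iff by blast
  then show ?thesis using N Suc_ile_eq by metis
qed

lemma sum_UN_le:
  fixes f :: "'b \<Rightarrow> real" and A :: "'a \<Rightarrow> 'b set"
  assumes "finite I" "\<And>i. i \<in> I \<Longrightarrow> finite (A i)" "\<And>x. 0 \<le> f x"
  shows "sum f (\<Union>i\<in>I. A i) \<le> (\<Sum>i\<in>I. sum f (A i))"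
proof -
  have "(\<Union>i\<in>I. A i) = snd ` Sigma I A" by force
  then have "sum f (\<Union>i\<in>I. A i) \<le> sum (f \<circ> snd) (Sigma I A)"
    using sum_image_le[where f = snd and g = f, OF finite_SigmaI[OF assms(1,2)]] assms(3) by simp
  also have "\<dots> = (\<Sum>i\<in>I. sum f (A i))"
    using assms(1,2) by (simp add: sum.Sigma split_def)
  finally show ?thesis .
qed

lemma ex_independent_cover:
  assumes "finite A" and refl: "\<And>x. x \<in> A \<Longrightarrow> R x x"
    and sym: "\<And>x y. x \<in> A \<Longrightarrow> y \<in> A \<Longrightarrow> R x y \<Longrightarrow> R y x"
  shows "\<exists>B\<subseteq>A. (\<forall>a\<in>A. \<exists>b\<in>B. R a b) \<and> (\<forall>b\<in>B. \<forall>b'\<in>B. R b b' \<longrightarrow> b = b')"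
  using assms(1) subset_refl
proof (induction A rule: finite_subset_induct')
  case empty
  then show ?case by blast
next
  case (insert x F)
  then obtain B where B: "B \<subseteq> F" "\<forall>a\<in>F. \<exists>b\<in>B. R a b" "\<forall>b\<in>B. \<forall>b'\<in>B. R b b' \<longrightarrow> b = b'"
    by blast
  show ?case
  proof (cases "\<exists>b\<in>B. R x b")
    case True
    then show ?thesis using B by (intro exI[of _ B]) blast
  next
    case False
    then have "\<forall>b\<in>B. \<not> R b x" using sym B(1) insert.hyps by blast
    then show ?thesis using B False refl[of x] insert.hyps by (intro exI[of _ "insert x B"]) blast
  qed
qed

lemma ereal_le_mult_Inf:
  fixes L :: ereal
  assumes "0 < c" and "\<And>x. x \<in> A \<Longrightarrow> L \<le> ereal c * x"
  shows "L \<le> ereal c * Inf A"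
proof -
  have c: "0 < ereal c" "ereal c \<noteq> \<infinity>" using assms(1) by auto
  have "L / ereal c \<le> Inf A"
    using assms(2) ereal_divide_le_pos[OF c] by (blast intro: Inf_greatest)
  then show ?thesis using ereal_divide_le_pos[OF c] by blast
qed

section \<open>Conjugacy\<close>

definition conjugate :: "('a, 'b) monoid_scheme \<Rightarrow> 'a set \<Rightarrow> 'a \<Rightarrow> 'a \<Rightarrow> bool" where
  "conjugate G H v w \<longleftrightarrow> (\<exists>x\<in>H. v = x \<otimes>\<^bsub>G\<^esub> w \<otimes>\<^bsub>G\<^esub> inv\<^bsub>G\<^esub> x)"

context group
begin

lemma inv_mult_cancel_left [simp]: "x \<in> carrier G \<Longrightarrow> y \<in> carrier G \<Longrightarrow> inv x \<otimes> (x \<otimes> y) = y"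
  by (simp add: m_assoc[symmetric])

lemma mult_inv_cancel_left [simp]: "x \<in> carrier G \<Longrightarrow> y \<in> carrier G \<Longrightarrow> x \<otimes> (inv x \<otimes> y) = y"
  by (simp add: m_assoc[symmetric])

lemma conj_mult_conj:
  assumes "x \<in> carrier G" "y \<in> carrier G" "z \<in> carrier G"
  shows "(x \<otimes> y) \<otimes> z \<otimes> inv (x \<otimes> y) = x \<otimes> (y \<otimes> z \<otimes> inv y) \<otimes> inv x"
  using assms by (simp add: inv_mult_group m_assoc)

lemma conj_hom:
  assumes "x \<in> carrier G"
  shows "(\<lambda>y. x \<otimes> y \<otimes> inv x) \<in> hom G G"
proof (rule homI)
  fix y z assume "y \<in> carrier G" "z \<in> carrier G"
  moreover have "inv x \<otimes> (x \<otimes> (z \<otimes> inv x)) = z \<otimes> inv x"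
    using assms \<open>z \<in> carrier G\<close> by (simp add: m_assoc[symmetric])
  ultimately show "x \<otimes> (y \<otimes> z) \<otimes> inv x = x \<otimes> y \<otimes> inv x \<otimes> (x \<otimes> z \<otimes> inv x)"
    using assms by (simp add: m_assoc)
qed (use assms in simp)

lemma conj_nat_pow:
  assumes "x \<in> carrier G" "y \<in> carrier G"
  shows "(x \<otimes> y \<otimes> inv x) [^] (n::nat) = x \<otimes> y [^] n \<otimes> inv x"
  using hom_nat_pow[OF conj_hom[OF assms(1)] assms(2) is_group is_group] by simp

lemma conj_int_pow:
  assumes "x \<in> carrier G" "y \<in> carrier G"
  shows "(x \<otimes> y \<otimes> inv x) [^] (n::int) = x \<otimes> y [^] n \<otimes> inv x"
  using hom_int_pow[OF conj_hom[OF assms(1)] assms(2) is_group is_group] by simp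

lemma conjugate_refl:
  "subgroup H G \<Longrightarrow> v \<in> carrier G \<Longrightarrow> conjugate G H v v"
  unfolding conjugate_def by (intro bexI[of _ \<one>]) (auto intro: subgroup.one_closed)

lemma conjugate_sym:
  assumes "subgroup H G" "w \<in> carrier G" "conjugate G H v w"
  shows "conjugate G H w v"
proof -
  obtain x where x: "x \<in> H" "v = x \<otimes> w \<otimes> inv x" using assms(3) unfolding conjugate_def by blast
  have "x \<in> carrier G" using subgroup.mem_carrier[OF assms(1) x(1)] .
  then have "w = inv x \<otimes> v \<otimes> inv (inv x)"
    using conj_mult_conj[of "inv x" x w] assms(2) x(2) by simp
  then show ?thesis unfolding conjugate_def using subgroup.m_inv_closed[OF assms(1) x(1)] by blast
qed

lemma conjugate_trans:
  assumes "subgroup H G" "u \<in> carrier G" "conjugate G H v w" "conjugate G H w u"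
  shows "conjugate G H v u"
proof -
  obtain x y where "x \<in> H" "v = x \<otimes> w \<otimes> inv x" "y \<in> H" "w = y \<otimes> u \<otimes> inv y"
    using assms(3,4) unfolding conjugate_def by blast
  moreover have "x \<in> carrier G" "y \<in> carrier G"
    using subgroup.mem_carrier[OF assms(1)] calculation by auto
  ultimately have "v = (x \<otimes> y) \<otimes> u \<otimes> inv (x \<otimes> y)" "x \<otimes> y \<in> H"
    using conj_mult_conj assms(2) subgroup.m_closed[OF assms(1)] by auto
  then show ?thesis unfolding conjugate_def by blast
qed

lemma conjugate_mem_normal:
  "N \<lhd> G \<Longrightarrow> w \<in> N \<Longrightarrow> conjugate G (carrier G) v w \<Longrightarrow> v \<in> N"
  unfolding conjugate_def by (auto intro: normal.inv_op_closed2)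

lemma conjugate_mem_normal_iff:
  assumes "N \<lhd> G" "w \<in> carrier G" "conjugate G (carrier G) v w"
  shows "v \<in> N \<longleftrightarrow> w \<in> N"
  using conjugate_mem_normal[OF assms(1) _ assms(3)]
    conjugate_mem_normal[OF assms(1) _ conjugate_sym[OF subgroup_self assms(2,3)]] by blast

end

section \<open>Normal closures\<close>

lemma normal_closure_subset: "S \<subseteq> normal_closure G S"
  unfolding normal_closure_def by auto

lemma normal_closure_least: "N \<lhd> G \<Longrightarrow> S \<subseteq> N \<Longrightarrow> normal_closure G S \<subseteq> N"
  unfolding normal_closure_def by auto


context group
begin

lemma normal_closure_normal:
  assumes "S \<subseteq> carrier G"
  shows "normal_closure G S \<lhd> G"
proof -
  let ?F = "{N. N \<lhd> G \<and> S \<subseteq> N}"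
  have "carrier G \<in> ?F" using assms normal_inv_iff subgroup_self by auto
  then have "subgroup (\<Inter>?F) G"
    by (intro subgroups_Inter) (auto dest: normal_imp_subgroup)
  then show ?thesis unfolding normal_closure_def
    by (rule normal_invI) (auto intro: normal.inv_op_closed2)
qed


lemma normal_subgroup_conj_closed:
  assumes "subgroup H G" "N \<lhd> G\<lparr>carrier := H\<rparr>" "h \<in> H" "y \<in> N"
  shows "h \<otimes> y \<otimes> inv h \<in> N"
  using normal.inv_op_closed2[OF assms(2), of h y] assms(3,4) m_inv_consistent[OF assms(1,3)] by simp

lemma conjugate_mem_normal_subgroup:
  "subgroup H G \<Longrightarrow> N \<lhd> G\<lparr>carrier := H\<rparr> \<Longrightarrow> w \<in> N \<Longrightarrow> conjugate G H v w \<Longrightarrow> v \<in> N"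
  unfolding conjugate_def using normal_subgroup_conj_closed by blast

lemma conj_preimage_normal:
  assumes HN: "H \<lhd> G" and NH: "N \<lhd> G\<lparr>carrier := H\<rparr>" and xc: "x \<in> carrier G"
  shows "{y \<in> H. x \<otimes> y \<otimes> inv x \<in> N} \<lhd> G\<lparr>carrier := H\<rparr>" (is "?P \<lhd> _")
proof -
  have HS: "subgroup H G" using HN normal_imp_subgroup by blast
  have Hc: "\<And>z. z \<in> H \<Longrightarrow> z \<in> carrier G" using subgroup.mem_carrier[OF HS] .
  have NS: "subgroup N G" using incl_subgroup[OF HS normal_imp_subgroup[OF NH]] .
  have "subgroup ?P G"
  proof (rule subgroupI)
    show "?P \<noteq> {}" using subgroup.one_closed[OF HS] subgroup.one_closed[OF NS] xc by force
  next
    fix y assume "y \<in> ?P"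
    moreover have "x \<otimes> inv y \<otimes> inv x = inv (x \<otimes> y \<otimes> inv x)" if "y \<in> H"
      using xc Hc[OF that] by (simp add: inv_mult_group m_assoc)
    ultimately show "inv y \<in> ?P"
      using subgroup.m_inv_closed[OF HS] subgroup.m_inv_closed[OF NS] by auto
  next
    fix y z assume "y \<in> ?P" "z \<in> ?P"
    moreover have "x \<otimes> (y \<otimes> z) \<otimes> inv x = (x \<otimes> y \<otimes> inv x) \<otimes> (x \<otimes> z \<otimes> inv x)" if "y \<in> H" "z \<in> H"
      using hom_mult[OF conj_hom[OF xc] Hc[OF that(1)] Hc[OF that(2)]] by simp
    ultimately show "y \<otimes> z \<in> ?P"
      using subgroup.m_closed[OF HS] subgroup.m_closed[OF NS] by auto
  qed (use Hc in blast)
  then have "subgroup ?P (G\<lparr>carrier := H\<rparr>)" using subgroup_incl[OF _ HS] by blast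
  then show ?thesis
  proof (rule group.normal_invI[OF subgroup.subgroup_is_group[OF HS is_group]])
    fix z y assume "z \<in> carrier (G\<lparr>carrier := H\<rparr>)" "y \<in> ?P"
    then have zH: "z \<in> H" and yH: "y \<in> H" and yN: "x \<otimes> y \<otimes> inv x \<in> N" by auto
    have "z \<otimes> y \<otimes> inv z \<in> H"
      using subgroup.m_closed[OF HS subgroup.m_closed[OF HS zH yH] subgroup.m_inv_closed[OF HS zH]] .
    moreover have "x \<otimes> (z \<otimes> y \<otimes> inv z) \<otimes> inv x
        = (x \<otimes> z \<otimes> inv x) \<otimes> (x \<otimes> y \<otimes> inv x) \<otimes> inv (x \<otimes> z \<otimes> inv x)"
      using xc Hc[OF zH] Hc[OF yH] by (simp add: inv_mult_group m_assoc)
    moreover have "\<dots> \<in> N"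
      using normal_subgroup_conj_closed[OF HS NH normal.inv_op_closed2[OF HN xc zH] yN] .
    ultimately show "z \<otimes>\<^bsub>G\<lparr>carrier := H\<rparr>\<^esub> y \<otimes>\<^bsub>G\<lparr>carrier := H\<rparr>\<^esub> inv\<^bsub>G\<lparr>carrier := H\<rparr>\<^esub> z \<in> ?P"
      using m_inv_consistent[OF HS zH] by simp
  qed
qed

lemma normal_closure_restrict_eq:
  assumes HN: "H \<lhd> G" and SH: "S \<subseteq> H" and TH: "T \<subseteq> H"
    and T_conj: "\<forall>t\<in>T. \<exists>s\<in>S. conjugate G (carrier G) t s"
    and T_cover: "\<forall>s\<in>S. \<forall>v. conjugate G (carrier G) v s \<longrightarrow> (\<exists>w\<in>T. conjugate G H v w)"
  shows "normal_closure (G\<lparr>carrier := H\<rparr>) T = normal_closure G S"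
proof
  have HS: "subgroup H G" using HN normal_imp_subgroup by blast
  have grpH: "group (G\<lparr>carrier := H\<rparr>)" using subgroup.subgroup_is_group[OF HS is_group] .
  have SG: "S \<subseteq> carrier G" using SH subgroup.subset[OF HS] by blast
  define NS where "NS = normal_closure G S"
  define NT where "NT = normal_closure (G\<lparr>carrier := H\<rparr>) T"
  have NS: "NS \<lhd> G" "S \<subseteq> NS" "NS \<subseteq> H"
    unfolding NS_def
    using normal_closure_normal[OF SG] normal_closure_subset[of S G] normal_closure_least[OF HN SH]
    by auto
  have NT: "NT \<lhd> G\<lparr>carrier := H\<rparr>" "T \<subseteq> NT"
    unfolding NT_def
    using group.normal_closure_normal[OF grpH] TH normal_closure_subset[of T "G\<lparr>carrier := H\<rparr>"]
    by auto
  have "T \<subseteq> NS" using T_conj conjugate_mem_normal[OF NS(1)] NS(2) by blast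
  then show "NT \<subseteq> NS"
    unfolding NT_def using normal_closure_least[OF normal_restrict_supergroup[OF HS NS(1,3)]] by blast
  have conj_T_in_NT: "v \<in> NT" if "s \<in> S" "conjugate G (carrier G) v s" for s v
    using T_cover that conjugate_mem_normal_subgroup[OF HS NT(1)] NT(2) by blast
  \<comment> \<open>Conjugation by x \<in> G maps T into NT, and its preimage of NT is normal in H, hence contains NT.\<close>
  have "NT \<lhd> G"
  proof (rule normal_invI)
    show "subgroup NT G" using incl_subgroup[OF HS normal_imp_subgroup[OF NT(1)]] .
  next
    fix x y assume xc: "x \<in> carrier G" and y: "y \<in> NT"
    have "T \<subseteq> {y \<in> H. x \<otimes> y \<otimes> inv x \<in> NT}"
    proof (intro subsetI CollectI conjI)
      fix t assume t: "t \<in> T"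
      then show "t \<in> H" using TH by blast
      obtain s g where s: "s \<in> S" and g: "g \<in> carrier G" "t = g \<otimes> s \<otimes> inv g"
        using T_conj t unfolding conjugate_def by blast
      have "x \<otimes> t \<otimes> inv x = (x \<otimes> g) \<otimes> s \<otimes> inv (x \<otimes> g)"
        using conj_mult_conj[OF xc g(1)] g(2) s SG by auto
      then show "x \<otimes> t \<otimes> inv x \<in> NT"
        using conj_T_in_NT[OF s] xc g(1) unfolding conjugate_def by blast
    qed
    then have "NT \<subseteq> {y \<in> H. x \<otimes> y \<otimes> inv x \<in> NT}"
      using normal_closure_least[OF conj_preimage_normal[OF HN NT(1) xc]] unfolding NT_def by blast
    then show "x \<otimes> y \<otimes> inv x \<in> NT" using y by blast
  qed
  moreover have "S \<subseteq> NT" using conj_T_in_NT conjugate_refl[OF subgroup_self] SG by blast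
  ultimately show "NS \<subseteq> NT" unfolding NS_def by (rule normal_closure_least)
qed

end

section \<open>Orders modulo a normal subgroup\<close>

context normal
begin

lemma rcos_eq_self_iff: "a \<in> carrier G \<Longrightarrow> H #> a = H \<longleftrightarrow> a \<in> H"
  using coset_join1 coset_join2 subgroup_axioms by blast

lemma coset_pow_eq_one_iff:
  "a \<in> carrier G \<Longrightarrow> (H #> a) [^]\<^bsub>G Mod H\<^esub> (n::nat) = \<one>\<^bsub>G Mod H\<^esub> \<longleftrightarrow> a [^] n \<in> H"
  by (simp add: FactGroup_pow rcos_eq_self_iff)

lemma coset_int_pow_eq_one_iff:
  "a \<in> carrier G \<Longrightarrow> (H #> a) [^]\<^bsub>G Mod H\<^esub> (n::int) = \<one>\<^bsub>G Mod H\<^esub> \<longleftrightarrow> a [^] n \<in> H"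
  by (simp add: FactGroup_int_pow rcos_eq_self_iff)

lemma coset_in_carrier: "a \<in> carrier G \<Longrightarrow> H #> a \<in> carrier (G Mod H)"
  unfolding carrier_FactGroup by blast

lemma elt_order_coset_le:
  assumes "a \<in> carrier G" "0 < n" "a [^] (n::nat) \<in> H"
  shows "elt_order (G Mod H) (H #> a) \<le> enat n"
proof -
  interpret Q: group "G Mod H" by (rule factorgroup_is_group)
  have "Q.ord (H #> a) dvd n"
    using Q.pow_eq_id coset_in_carrier coset_pow_eq_one_iff assms(1,3) by blast
  then show ?thesis using assms(2) by (auto simp: elt_order_def dest: dvd_imp_le)
qed

context
  fixes a assumes fin: "finite (rcosets H)" and a: "a \<in> carrier G"
begin

lemma ord_coset_pos: "0 < group.ord (G Mod H) (H #> a)"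
proof -
  have "finite (carrier (G Mod H))" using fin by (simp add: FactGroup_def)
  then show ?thesis using group.ord_ge_1[OF factorgroup_is_group _ coset_in_carrier[OF a]] by simp
qed

lemma pow_ord_coset_mem: "a [^] group.ord (G Mod H) (H #> a) \<in> H"
  using group.pow_ord_eq_1[OF factorgroup_is_group coset_in_carrier[OF a]]
    coset_pow_eq_one_iff[OF a] by blast

lemma ord_coset_dvd: "a [^] (n::int) \<in> H \<Longrightarrow> int (group.ord (G Mod H) (H #> a)) dvd n"
  using group.int_pow_eq_id[OF factorgroup_is_group coset_in_carrier[OF a]]
    coset_int_pow_eq_one_iff[OF a] by blast

end

end

section \<open>Roots and the quantity nu\<close>

context group
begin

lemma nu_ge_exponent:
  assumes "g \<notin> K" "a \<in> carrier G" "g = a [^] (n::int)" "n \<noteq> 0"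
  shows "enat (nat n) \<le> nu G K g"
  unfolding nu_def using assms by (auto intro!: Sup_upper)

lemma nu_ge_elt_order:
  assumes "g \<in> K" "a \<in> carrier G" "a [^] (n::int) = g"
  shows "elt_order (G Mod K) (K #> a) \<le> nu G K g"
  unfolding nu_def using assms by (auto intro!: Sup_upper)

lemma nu_pos:
  assumes "g \<in> carrier G"
  shows "0 < nu G K g"
proof (cases "g \<in> K")
  case True
  have "0 < elt_order (G Mod K) (K #> g)" by (simp add: elt_order_def zero_enat_def)
  also have "\<dots> \<le> nu G K g" using nu_ge_elt_order[OF True assms, of 1] assms by simp
  finally show ?thesis .
next
  case False
  then have "enat 1 \<le> nu G K g" using nu_ge_exponent[OF False assms, of 1] assms by simp
  then show ?thesis by (simp add: one_enat_def Suc_ile_eq zero_enat_def)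
qed

lemma nu_root_witness:
  assumes "enat N \<le> nu G K g" "0 < N"
  obtains a n where "a \<in> carrier G" "a [^] (n::int) = g"
    "g \<notin> K \<Longrightarrow> int N \<le> n" "g \<in> K \<Longrightarrow> enat N \<le> elt_order (G Mod K) (K #> a)"
proof (cases "g \<in> K")
  case True
  then have "enat N \<le> Sup {elt_order (G Mod K) (K #> a) | a. a \<in> carrier G \<and> (\<exists>n::int. a [^] n = g)}"
    using assms(1) unfolding nu_def by simp
  then obtain a n where "a \<in> carrier G" "a [^] (n::int) = g" "enat N \<le> elt_order (G Mod K) (K #> a)"
    using enat_le_Sup_imp_ex[OF _ assms(2)] by blast
  then show ?thesis using that True by blast
next
  case False
  then have "enat N \<le> Sup {enat (nat n) | n::int. n \<noteq> 0 \<and> (\<exists>a\<in>carrier G. g = a [^] n)}"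
    using assms(1) unfolding nu_def by simp
  then obtain a n where "a \<in> carrier G" "g = a [^] (n::int)" "enat N \<le> enat (nat n)"
    using enat_le_Sup_imp_ex[OF _ assms(2)] by blast
  then show ?thesis using that False assms(2) by fastforce
qed

end

lemma nu_inv_nonneg: "0 \<le> nu_inv G K g"
  unfolding nu_inv_def by (simp split: enat.split)

lemma nu_inv_le_divide:
  assumes "enat N \<le> enat r * nu G K g" "0 < N"
  shows "nu_inv G K g \<le> real r / real N"
proof (cases "nu G K g")
  case (enat m)
  then have "N \<le> r * m" using assms(1) by simp
  then have "real N \<le> real r * real m" by (simp flip: of_nat_mult)
  moreover have "0 < m" using \<open>N \<le> r * m\<close> assms(2) by (auto intro: Nat.gr0I)
  ultimately show ?thesis using enat assms(2) by (simp add: nu_inv_def divide_simps mult.commute)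
next
  case infinity
  then show ?thesis by (simp add: nu_inv_def)
qed

section \<open>Transversals of conjugacy classes\<close>

context group
begin

lemma conjugacy_transversal:
  assumes HS: "subgroup H G" and fin: "finite (rcosets H)" and s: "s \<in> carrier G"
  obtains T where "finite T" "\<forall>w\<in>T. conjugate G (carrier G) w s"
    "\<forall>v. conjugate G (carrier G) v s \<longrightarrow> (\<exists>w\<in>T. conjugate G H v w)"
    "\<forall>v\<in>T. \<forall>w\<in>T. conjugate G H v w \<longrightarrow> v = w"
proof -
  have cosets: "rcosets H \<subseteq> (\<lambda>x. H #> x) ` carrier G" unfolding RCOSETS_def by auto
  obtain Y where Y: "Y \<subseteq> carrier G" "finite Y" "rcosets H = (\<lambda>x. H #> x) ` Y"
    using finite_subset_image[OF fin cosets] by blast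
  define T0 where "T0 = (\<lambda>y. y \<otimes> s \<otimes> inv y) ` Y"
  have T0_conj: "\<forall>w\<in>T0. conjugate G (carrier G) w s"
    unfolding T0_def conjugate_def using Y(1) by blast
  have T0c: "T0 \<subseteq> carrier G" unfolding T0_def using Y(1) s by auto
  have T0_cover: "\<exists>w\<in>T0. conjugate G H v w" if v: "conjugate G (carrier G) v s" for v
  proof -
    obtain g where g: "g \<in> carrier G" "v = g \<otimes> s \<otimes> inv g" using v unfolding conjugate_def by blast
    have "H #> g \<in> (\<lambda>x. H #> x) ` Y" using rcosetsI[OF subgroup.subset[OF HS] g(1)] Y(3) by simp
    then obtain y where y: "y \<in> Y" "H #> g = H #> y" by (rule imageE)
    have yc: "y \<in> carrier G" using y(1) Y(1) by blast
    define h where "h = g \<otimes> inv y"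
    have hH: "h \<in> H" unfolding h_def
      using subgroup.rcos_module_imp[OF HS is_group yc, of g] rcos_self[OF g(1) HS] y(2) by simp
    have "g = h \<otimes> y" unfolding h_def using g(1) yc by (simp add: m_assoc)
    then have "v = h \<otimes> (y \<otimes> s \<otimes> inv y) \<otimes> inv h"
      using conj_mult_conj[of h y s] g yc s hH subgroup.mem_carrier[OF HS] by simp
    then show ?thesis unfolding T0_def conjugate_def using hH y(1) by blast
  qed
  have T0fin: "finite T0" unfolding T0_def using Y(2) by blast
  have refl: "\<And>v. v \<in> T0 \<Longrightarrow> conjugate G H v v" using conjugate_refl[OF HS] T0c by blast
  have sym: "\<And>v w. v \<in> T0 \<Longrightarrow> w \<in> T0 \<Longrightarrow> conjugate G H v w \<Longrightarrow> conjugate G H w v"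
    using conjugate_sym[OF HS] T0c by blast
  obtain T where T: "T \<subseteq> T0" "\<forall>v\<in>T0. \<exists>w\<in>T. conjugate G H v w"
    "\<forall>v\<in>T. \<forall>w\<in>T. conjugate G H v w \<longrightarrow> v = w"
    using ex_independent_cover[of T0 "conjugate G H", OF T0fin refl sym] by blast
  show ?thesis
  proof (rule that[OF finite_subset[OF T(1) T0fin]])
    show "\<forall>w\<in>T. conjugate G (carrier G) w s" using T(1) T0_conj by blast
    show "\<forall>v\<in>T. \<forall>w\<in>T. conjugate G H v w \<longrightarrow> v = w" by (rule T(3))
    show "\<forall>v. conjugate G (carrier G) v s \<longrightarrow> (\<exists>w\<in>T. conjugate G H v w)"
    proof (intro allI impI)
      fix v assume "conjugate G (carrier G) v s"
      then obtain w0 where w0: "w0 \<in> T0" "conjugate G H v w0" using T0_cover by blast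
      then obtain w where "w \<in> T" "conjugate G H w0 w" using T(2) by blast
      then show "\<exists>w\<in>T. conjugate G H v w" using conjugate_trans[OF HS _ w0(2)] T(1) T0c by blast
    qed
  qed
qed


lemma nat_pow_conj_int_pow:
  assumes "a \<in> carrier G"
  shows "a [^] (i::nat) \<otimes> a [^] (n::int) \<otimes> inv (a [^] i) = a [^] n"
proof -
  have "a [^] i \<otimes> a [^] n = a [^] n \<otimes> a [^] i"
    using int_pow_mult[OF assms, of "int i" n] int_pow_mult[OF assms, of n "int i"]
    by (simp add: int_pow_int add.commute)
  then show ?thesis using assms by (simp add: m_assoc)
qed

lemma card_conjugacy_transversal_mult_ord_le:
  assumes HN: "H \<lhd> G" and fin: "finite (rcosets H)" and a: "a \<in> carrier G"
    and s: "s = a [^] (n::int)"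
    and T_conj: "\<forall>w\<in>T. conjugate G (carrier G) w s"
    and T_indep: "\<forall>v\<in>T. \<forall>w\<in>T. conjugate G H v w \<longrightarrow> v = w"
  shows "card T * group.ord (G Mod H) (H #> a) \<le> card (rcosets H)"
proof -
  interpret H: normal H G by (rule HN)
  define r where "r = group.ord (G Mod H) (H #> a)"
  have sc: "s \<in> carrier G" using s a by simp
  obtain c where c: "\<And>w. w \<in> T \<Longrightarrow> c w \<in> carrier G"
    and c_conj: "\<And>w. w \<in> T \<Longrightarrow> c w \<otimes> s \<otimes> inv (c w) = w"
    using T_conj unfolding conjugate_def by metis
  have shift: "(y \<otimes> a [^] i) \<otimes> s \<otimes> inv (y \<otimes> a [^] i) = y \<otimes> s \<otimes> inv y"
    if "y \<in> carrier G" for y and i :: nat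
    using conj_mult_conj[OF that _ sc, of "a [^] i"] nat_pow_conj_int_pow[OF a] a s by simp
  define \<phi> where "\<phi> = (\<lambda>(w, i::nat). H #> (c w \<otimes> a [^] i))"
  have "\<phi> ` (T \<times> {..<r}) \<subseteq> rcosets H"
    unfolding \<phi>_def using c a by (auto intro: rcosetsI)
  moreover have "inj_on \<phi> (T \<times> {..<r})"
  proof (rule inj_onI, clarify)
    fix v i w j assume v: "v \<in> T" "i < r" and w: "w \<in> T" "j < r"
      and eq: "\<phi> (v, i) = \<phi> (w, j)"
    define x where "x = c v \<otimes> a [^] i"
    define y where "y = c w \<otimes> a [^] j"
    have xc: "x \<in> carrier G" and yc: "y \<in> carrier G" using c v(1) w(1) a by (auto simp: x_def y_def)
    define h where "h = y \<otimes> inv x"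
    have hH: "h \<in> H" unfolding h_def
      using H.rcos_module_imp[OF is_group xc] rcos_self[OF yc H.subgroup_axioms] eq
      by (simp add: \<phi>_def x_def y_def)
    have hc: "h \<in> carrier G" using hH H.mem_carrier by blast
    have y_eq: "y = h \<otimes> x" using xc yc by (simp add: h_def m_assoc)
    have "w = y \<otimes> s \<otimes> inv y" using shift[OF c[OF w(1)]] c_conj[OF w(1)] by (simp add: y_def)
    also have "\<dots> = h \<otimes> (x \<otimes> s \<otimes> inv x) \<otimes> inv h"
      unfolding y_eq using conj_mult_conj[OF hc xc sc] .
    also have "x \<otimes> s \<otimes> inv x = v" using shift[OF c[OF v(1)]] c_conj[OF v(1)] by (simp add: x_def)
    finally have "conjugate G H w v" unfolding conjugate_def using hH by blast
    then have "v = w" using T_indep v(1) w(1) by (metis (no_types))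
    have "inv x \<otimes> y = inv (a [^] i) \<otimes> a [^] j"
      using c[OF v(1)] a \<open>v = w\<close> by (simp add: x_def y_def inv_mult_group m_assoc)
    also have "\<dots> = a [^] (- int i + int j)"
      using int_pow_mult[OF a, of "- int i" "int j"] int_pow_neg[OF a, of "int i"] by (simp add: int_pow_int)
    finally have "a [^] (- int i + int j) \<in> H"
      using H.inv_op_closed1[OF xc hH] xc yc by (simp add: h_def m_assoc)
    then have dvd: "int r dvd - int i + int j" unfolding r_def by (rule H.ord_coset_dvd[OF fin a])
    have "- int i + int j = 0"
    proof (rule ccontr)
      assume "- int i + int j \<noteq> 0"
      then have "int r \<le> \<bar>- int i + int j\<bar>" using dvd_imp_le_int[OF _ dvd] by simp
      then show False using v(2) w(2) by linarith
    qed
    then have "i = j" by simp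
    then show "v = w \<and> i = j" using \<open>v = w\<close> by simp
  qed
  ultimately have "card (T \<times> {..<r}) \<le> card (rcosets H)" using card_inj_on_le[OF _ _ fin] by blast
  then show ?thesis by (simp add: r_def card_cartesian_product)
qed

section \<open>Passing to a normal subgroup of finite index\<close>

lemma elt_order_coset_le_mult_conj_pow:
  assumes HS: "subgroup H G" and KN: "K \<lhd> G" and x: "x \<in> carrier G" and a: "a \<in> carrier G"
    and bH: "x \<otimes> a [^] r \<otimes> inv x \<in> H" and r: "0 < r"
  shows "elt_order (G Mod K) (K #> a)
    \<le> enat r * elt_order (G\<lparr>carrier := H\<rparr> Mod (K \<inter> H)) ((K \<inter> H) #>\<^bsub>G\<lparr>carrier := H\<rparr>\<^esub> (x \<otimes> a [^] r \<otimes> inv x))"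
    (is "_ \<le> _ * elt_order ?Q ?y")
proof -
  interpret K: normal K G by (rule KN)
  interpret KH: normal "K \<inter> H" "G\<lparr>carrier := H\<rparr>" by (rule normal_Int_subgroup[OF HS KN])
  define b where "b = x \<otimes> a [^] r \<otimes> inv x"
  define j where "j = group.ord ?Q ?y"
  show ?thesis
  proof (cases "j = 0")
    case True
    then show ?thesis using r by (simp add: elt_order_def j_def)
  next
    case False
    have "b [^]\<^bsub>G\<lparr>carrier := H\<rparr>\<^esub> j \<in> K \<inter> H"
      using KH.coset_pow_eq_one_iff[of b j] group.pow_ord_eq_1[OF KH.factorgroup_is_group KH.coset_in_carrier]
        bH unfolding b_def j_def by simp
    moreover have "b [^]\<^bsub>G\<lparr>carrier := H\<rparr>\<^esub> j = x \<otimes> a [^] (r * j) \<otimes> inv x"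
      using conj_nat_pow[OF x, of "a [^] r" j] a by (simp add: b_def nat_pow_pow flip: nat_pow_consistent)
    ultimately have "x \<otimes> a [^] (r * j) \<otimes> inv x \<in> K" by simp
    moreover have "conjugate G (carrier G) (x \<otimes> a [^] (r * j) \<otimes> inv x) (a [^] (r * j))"
      unfolding conjugate_def using x by blast
    ultimately have "a [^] (r * j) \<in> K"
      using conjugate_mem_normal_iff[OF KN nat_pow_closed[OF a]] by blast
    then have "elt_order (G Mod K) (K #> a) \<le> enat (r * j)"
      using K.elt_order_coset_le[OF a] r False by simp
    then show ?thesis using False by (simp add: elt_order_def j_def b_def)
  qed
qed

lemma nu_restrict_conj_ge:
  assumes HN: "H \<lhd> G" and KN: "K \<lhd> G" and fin: "finite (rcosets H)"
    and a: "a \<in> carrier G" and s: "a [^] (n::int) = s" and sH: "s \<in> H" and x: "x \<in> carrier G"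
    and N: "0 < N" and outside: "s \<notin> K \<Longrightarrow> int N \<le> n"
    and inside: "s \<in> K \<Longrightarrow> enat N \<le> elt_order (G Mod K) (K #> a)"
  shows "enat N \<le> enat (group.ord (G Mod H) (H #> a)) * nu (G\<lparr>carrier := H\<rparr>) (K \<inter> H) (x \<otimes> s \<otimes> inv x)"
proof -
  interpret H: normal H G by (rule HN)
  interpret GH: group "G\<lparr>carrier := H\<rparr>" by (rule H.subgroup_is_group[OF is_group])
  define r where "r = group.ord (G Mod H) (H #> a)"
  define b where "b = x \<otimes> a [^] r \<otimes> inv x"
  define w where "w = x \<otimes> s \<otimes> inv x"
  have r: "0 < r" unfolding r_def by (rule H.ord_coset_pos[OF fin a])
  obtain q where n: "n = int r * q"
    using H.ord_coset_dvd[OF fin a] s sH unfolding r_def by blast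
  have bH: "b \<in> H"
    unfolding b_def r_def using H.inv_op_closed2[OF x H.pow_ord_coset_mem[OF fin a]] .
  have b_pow: "b [^]\<^bsub>G\<lparr>carrier := H\<rparr>\<^esub> q = w"
  proof -
    have "b [^] q = x \<otimes> (a [^] r) [^] q \<otimes> inv x" unfolding b_def using conj_int_pow[OF x] a by simp
    also have "(a [^] r) [^] q = s" using int_pow_pow[OF a, of "int r" q] s n by (simp add: int_pow_int)
    finally show ?thesis using int_pow_consistent[OF H.subgroup_axioms bH] by (simp add: w_def)
  qed
  have sc: "s \<in> carrier G" using sH H.mem_carrier by blast
  have "conjugate G (carrier G) w s" unfolding conjugate_def w_def using x by blast
  then have wK: "w \<in> K \<inter> H \<longleftrightarrow> s \<in> K"
    using conjugate_mem_normal_iff[OF KN sc] H.inv_op_closed2[OF x sH] by (simp add: w_def)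
  show ?thesis
  proof (cases "s \<in> K")
    case False
    have "int N \<le> int r * q" using outside False n by simp
    then have "0 < int r * q" using N by linarith
    then have q: "0 < q" using r by (simp add: zero_less_mult_iff)
    have "int N \<le> int (r * nat q)" using \<open>int N \<le> int r * q\<close> q by simp
    then have "enat N \<le> enat r * enat (nat q)" by (simp only: of_nat_le_iff times_enat_simps enat_ord_simps)
    also have "\<dots> \<le> enat r * nu (G\<lparr>carrier := H\<rparr>) (K \<inter> H) w"
      using GH.nu_ge_exponent[of w "K \<inter> H" b q, OF _ _ b_pow[symmetric]] False wK bH q
      by (intro mult_left_mono) simp_all
    finally show ?thesis by (simp add: r_def w_def)
  next
    case True
    have "enat N \<le> elt_order (G Mod K) (K #> a)" using inside True .
    also have "\<dots> \<le> enat r * elt_order (G\<lparr>carrier := H\<rparr> Mod (K \<inter> H)) ((K \<inter> H) #>\<^bsub>G\<lparr>carrier := H\<rparr>\<^esub> b)"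
      using elt_order_coset_le_mult_conj_pow[OF H.subgroup_axioms KN x a _ r] bH unfolding b_def .
    also have "\<dots> \<le> enat r * nu (G\<lparr>carrier := H\<rparr>) (K \<inter> H) w"
      using GH.nu_ge_elt_order[of w "K \<inter> H" b q, OF _ _ b_pow] wK True bH
      by (intro mult_left_mono) simp_all
    finally show ?thesis by (simp add: r_def w_def)
  qed
qed

lemma conjugacy_transversal_nu_inv_sum_le:
  assumes HN: "H \<lhd> G" and KN: "K \<lhd> G" and fin: "finite (rcosets H)" and sH: "s \<in> H"
    and N: "0 < N" and nu: "enat N \<le> nu G K s"
  obtains T where "finite T" "T \<subseteq> H" "\<forall>w\<in>T. conjugate G (carrier G) w s"
    "\<forall>v. conjugate G (carrier G) v s \<longrightarrow> (\<exists>w\<in>T. conjugate G H v w)"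
    "(\<Sum>w\<in>T. nu_inv (G\<lparr>carrier := H\<rparr>) (K \<inter> H) w) \<le> real (card (rcosets H)) / real N"
proof -
  interpret H: normal H G by (rule HN)
  have sc: "s \<in> carrier G" using sH H.mem_carrier by blast
  obtain a n where a: "a \<in> carrier G" and s: "a [^] (n::int) = s"
    and outside: "s \<notin> K \<Longrightarrow> int N \<le> n" and inside: "s \<in> K \<Longrightarrow> enat N \<le> elt_order (G Mod K) (K #> a)"
    using nu_root_witness[OF nu N] by blast
  define r where "r = group.ord (G Mod H) (H #> a)"
  obtain T where T: "finite T" "\<forall>w\<in>T. conjugate G (carrier G) w s"
    "\<forall>v. conjugate G (carrier G) v s \<longrightarrow> (\<exists>w\<in>T. conjugate G H v w)"
    "\<forall>v\<in>T. \<forall>w\<in>T. conjugate G H v w \<longrightarrow> v = w"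
    using conjugacy_transversal[OF H.subgroup_axioms fin sc] by blast
  have TH: "T \<subseteq> H" using T(2) conjugate_mem_normal[OF HN sH] by blast
  have nu_inv_le: "nu_inv (G\<lparr>carrier := H\<rparr>) (K \<inter> H) w \<le> real r / real N" if w: "w \<in> T" for w
  proof -
    obtain x where x: "x \<in> carrier G" "w = x \<otimes> s \<otimes> inv x" using T(2) w unfolding conjugate_def by blast
    show ?thesis unfolding r_def x(2)
      by (rule nu_inv_le_divide[OF nu_restrict_conj_ge[OF HN KN fin a s sH x(1) N outside inside] N])
  qed
  have "(\<Sum>w\<in>T. nu_inv (G\<lparr>carrier := H\<rparr>) (K \<inter> H) w) \<le> real (card T) * (real r / real N)"
    using sum_mono[OF nu_inv_le] by simp
  also have "\<dots> = real (card T * r) / real N" by simp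
  also have "\<dots> \<le> real (card (rcosets H)) / real N"
    using card_conjugacy_transversal_mult_ord_le[OF HN fin a s[symmetric] T(2,4)]
    by (intro divide_right_mono) (simp_all add: r_def flip: of_nat_mult)
  finally show ?thesis using that T(1,2,3) TH by blast
qed

lemma generator_transversal_nu_inv_sum_le:
  assumes HN: "H \<lhd> G" and KN: "K \<lhd> G" and fin: "finite (rcosets H)" and sH: "s \<in> H"
    and N: "0 < N"
  obtains T where "finite T" "T \<subseteq> H" "\<forall>w\<in>T. conjugate G (carrier G) w s"
    "\<forall>v. conjugate G (carrier G) v s \<longrightarrow> (\<exists>w\<in>T. conjugate G H v w)"
    "(\<Sum>w\<in>T. nu_inv (G\<lparr>carrier := H\<rparr>) (K \<inter> H) w)
       \<le> real (card (rcosets H)) * nu_inv G K s + real (card (rcosets H)) / real N"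
proof (cases "nu G K s")
  case (enat m)
  have "s \<in> carrier G" using subgroup.mem_carrier[OF normal_imp_subgroup[OF HN] sH] .
  then have "0 < m" using nu_pos[of s K] enat by (simp add: zero_enat_def)
  then obtain T where T: "finite T" "T \<subseteq> H" "\<forall>w\<in>T. conjugate G (carrier G) w s"
    "\<forall>v. conjugate G (carrier G) v s \<longrightarrow> (\<exists>w\<in>T. conjugate G H v w)"
    and sum: "(\<Sum>w\<in>T. nu_inv (G\<lparr>carrier := H\<rparr>) (K \<inter> H) w) \<le> real (card (rcosets H)) / real m"
    using conjugacy_transversal_nu_inv_sum_le[OF HN KN fin sH, of m] enat by (metis order.refl)
  show ?thesis
  proof (rule that[OF T])
    have "real (card (rcosets H)) / real m = real (card (rcosets H)) * nu_inv G K s"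
      using enat by (simp add: nu_inv_def)
    then show "(\<Sum>w\<in>T. nu_inv (G\<lparr>carrier := H\<rparr>) (K \<inter> H) w)
       \<le> real (card (rcosets H)) * nu_inv G K s + real (card (rcosets H)) / real N"
      using sum by (intro add_increasing2) simp_all
  qed
next
  case infinity
  obtain T where T: "finite T" "T \<subseteq> H" "\<forall>w\<in>T. conjugate G (carrier G) w s"
    "\<forall>v. conjugate G (carrier G) v s \<longrightarrow> (\<exists>w\<in>T. conjugate G H v w)"
    and sum: "(\<Sum>w\<in>T. nu_inv (G\<lparr>carrier := H\<rparr>) (K \<inter> H) w) \<le> real (card (rcosets H)) / real N"
    by (rule conjugacy_transversal_nu_inv_sum_le[OF HN KN fin sH N]) (simp add: infinity)
  show ?thesis by (rule that[OF T]) (use sum infinity in \<open>simp add: nu_inv_def\<close>)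
qed

lemma restrict_generating_set:
  assumes HN: "H \<lhd> G" and KN: "K \<lhd> G" and fin: "finite (rcosets H)"
    and S: "finite S" "S \<subseteq> H" and N: "0 < N"
  obtains T where "finite T" "T \<subseteq> H" "normal_closure (G\<lparr>carrier := H\<rparr>) T = normal_closure G S"
    "relsize_set (G\<lparr>carrier := H\<rparr>) (K \<inter> H) T
       \<le> real (card (rcosets H)) * relsize_set G K S + real (card S) * (real (card (rcosets H)) / real N)"
proof -
  define k where "k = real (card (rcosets H))"
  have "\<exists>T. finite T \<and> T \<subseteq> H \<and> (\<forall>w\<in>T. conjugate G (carrier G) w s)
      \<and> (\<forall>v. conjugate G (carrier G) v s \<longrightarrow> (\<exists>w\<in>T. conjugate G H v w))
      \<and> (\<Sum>w\<in>T. nu_inv (G\<lparr>carrier := H\<rparr>) (K \<inter> H) w) \<le> k * nu_inv G K s + k / real N"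
    if s: "s \<in> S" for s
  proof -
    obtain T where "finite T" "T \<subseteq> H" "\<forall>w\<in>T. conjugate G (carrier G) w s"
      "\<forall>v. conjugate G (carrier G) v s \<longrightarrow> (\<exists>w\<in>T. conjugate G H v w)"
      "(\<Sum>w\<in>T. nu_inv (G\<lparr>carrier := H\<rparr>) (K \<inter> H) w) \<le> k * nu_inv G K s + k / real N"
      unfolding k_def by (rule generator_transversal_nu_inv_sum_le[OF HN KN fin subsetD[OF S(2) s] N])
    then show ?thesis by blast
  qed
  then obtain f where f: "\<forall>s\<in>S. finite (f s) \<and> f s \<subseteq> H \<and> (\<forall>w\<in>f s. conjugate G (carrier G) w s)
      \<and> (\<forall>v. conjugate G (carrier G) v s \<longrightarrow> (\<exists>w\<in>f s. conjugate G H v w))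
      \<and> (\<Sum>w\<in>f s. nu_inv (G\<lparr>carrier := H\<rparr>) (K \<inter> H) w) \<le> k * nu_inv G K s + k / real N"
    by (metis (no_types))
  define T where "T = (\<Union>s\<in>S. f s)"
  have f_fin: "finite (f s)" and f_H: "f s \<subseteq> H" and f_conj: "\<forall>w\<in>f s. conjugate G (carrier G) w s"
    and f_cover: "\<forall>v. conjugate G (carrier G) v s \<longrightarrow> (\<exists>w\<in>f s. conjugate G H v w)"
    and f_sum: "(\<Sum>w\<in>f s. nu_inv (G\<lparr>carrier := H\<rparr>) (K \<inter> H) w) \<le> k * nu_inv G K s + k / real N"
    if s: "s \<in> S" for s
    using bspec[OF f s] by simp_all
  have T_fin: "finite T" unfolding T_def using S(1) f_fin by simp
  have TH: "T \<subseteq> H" unfolding T_def using f_H by (simp add: UN_least)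
  have "\<forall>t\<in>T. \<exists>s\<in>S. conjugate G (carrier G) t s" unfolding T_def using f_conj by blast
  moreover have "\<forall>s\<in>S. \<forall>v. conjugate G (carrier G) v s \<longrightarrow> (\<exists>w\<in>T. conjugate G H v w)"
    unfolding T_def using f_cover by blast
  ultimately have "normal_closure (G\<lparr>carrier := H\<rparr>) T = normal_closure G S"
    by (rule normal_closure_restrict_eq[OF HN S(2) TH])
  moreover have "relsize_set (G\<lparr>carrier := H\<rparr>) (K \<inter> H) T \<le> k * relsize_set G K S + real (card S) * (k / real N)"
  proof -
    have "relsize_set (G\<lparr>carrier := H\<rparr>) (K \<inter> H) T
        \<le> (\<Sum>s\<in>S. \<Sum>w\<in>f s. nu_inv (G\<lparr>carrier := H\<rparr>) (K \<inter> H) w)"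
      unfolding relsize_set_def T_def by (rule sum_UN_le[OF S(1) f_fin nu_inv_nonneg])
    also have "\<dots> \<le> (\<Sum>s\<in>S. k * nu_inv G K s + k / real N)" by (intro sum_mono f_sum)
    also have "\<dots> = k * relsize_set G K S + real (card S) * (k / real N)"
      by (simp add: relsize_set_def sum.distrib sum_distrib_left)
    finally show ?thesis .
  qed
  ultimately show ?thesis using that[OF T_fin TH] unfolding k_def by blast
qed

lemma card_rcosets_pos:
  assumes "subgroup H G" "finite (rcosets H)"
  shows "0 < card (rcosets H)"
proof -
  have "H #> \<one> \<in> rcosets H" using rcosetsI[OF subgroup.subset[OF assms(1)]] by simp
  then show ?thesis using assms(2) card_gt_0_iff by blast
qed

text \<open>A generator with nu = \<infinity> still contributes |G:H| / N for the chosen N, which is why the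
  bound is only reached in the limit.\<close>

lemma relsize_restrict_le:
  assumes HN: "H \<lhd> G" and KN: "K \<lhd> G" and fin: "finite (rcosets H)"
    and S: "finite S" "S \<subseteq> carrier G" "normal_closure G S \<subseteq> H"
  shows "relsize (G\<lparr>carrier := H\<rparr>) (K \<inter> H) (normal_closure G S)
    \<le> ereal (real (card (rcosets H)) * relsize_set G K S)"
proof (rule ereal_le_epsilon2)
  fix e :: real assume e: "0 < e"
  define k where "k = real (card (rcosets H))"
  define N where "N = nat \<lceil>real (card S) * k / e\<rceil> + 1"
  have "real (card S) * k / e \<le> real N" unfolding N_def by linarith
  then have Ne: "real (card S) * (k / real N) \<le> e" using e by (simp add: N_def field_simps)
  have N_pos: "0 < N" unfolding N_def by simp
  have SH: "S \<subseteq> H" using S(3) normal_closure_subset[of S G] by blast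
  obtain T where T: "finite T" "T \<subseteq> H" "normal_closure (G\<lparr>carrier := H\<rparr>) T = normal_closure G S"
    "relsize_set (G\<lparr>carrier := H\<rparr>) (K \<inter> H) T \<le> k * relsize_set G K S + real (card S) * (k / real N)"
    unfolding k_def by (rule restrict_generating_set[OF HN KN fin S(1) SH N_pos])
  have "relsize (G\<lparr>carrier := H\<rparr>) (K \<inter> H) (normal_closure G S)
      \<le> ereal (relsize_set (G\<lparr>carrier := H\<rparr>) (K \<inter> H) T)"
    unfolding relsize_def using T(1-3) by (intro Inf_lower CollectI exI[of _ T] conjI) simp_all
  also have "\<dots> \<le> ereal (k * relsize_set G K S) + ereal e" using T(4) Ne by simp
  finally show "relsize (G\<lparr>carrier := H\<rparr>) (K \<inter> H) (normal_closure G S)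
      \<le> ereal (real (card (rcosets H)) * relsize_set G K S) + ereal e"
    unfolding k_def .
qed

end


theorem mainTheorem14:
  fixes G :: "('a, 'b) monoid_scheme" and M K H :: "'a set"
  assumes "group G"
    and "M \<lhd> G" and "K \<lhd> G"
    and "\<exists>S. finite S \<and> S \<subseteq> carrier G \<and> normal_closure G S = M"
    and "H \<lhd> G" and "finite (rcosets\<^bsub>G\<^esub> H)" and "M \<subseteq> H"
  shows "relsize (G\<lparr>carrier := H\<rparr>) (K \<inter> H) M
           \<le> ereal (real (card (rcosets\<^bsub>G\<^esub> H))) * relsize G K M"
proof -
  interpret group G by fact
  define A where "A = {ereal (relsize_set G K S) | S. finite S \<and> S \<subseteq> carrier G \<and> normal_closure G S = M}"
  have "0 < card (rcosets\<^bsub>G\<^esub> H)"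
    using card_rcosets_pos[OF normal_imp_subgroup] assms(5,6) by blast
  then have "relsize (G\<lparr>carrier := H\<rparr>) (K \<inter> H) M \<le> ereal (real (card (rcosets\<^bsub>G\<^esub> H))) * Inf A"
  proof (rule ereal_le_mult_Inf[OF of_nat_0_less_iff[THEN iffD2]])
    fix x assume "x \<in> A"
    then obtain S where S: "finite S" "S \<subseteq> carrier G" "normal_closure G S = M"
      and x: "x = ereal (relsize_set G K S)" unfolding A_def by blast
    show "relsize (G\<lparr>carrier := H\<rparr>) (K \<inter> H) M \<le> ereal (real (card (rcosets\<^bsub>G\<^esub> H))) * x"
      using relsize_restrict_le[OF assms(5,3,6) S(1,2)] S(3) assms(7) unfolding x by simp
  qed
  then show ?thesis unfolding relsize_def[of G K M] A_def .
qed

end
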